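(* In the standing setup with $A$ generic, for $i=1,2,3$ and all $x\in\mathbb R^6$: $\nabla p_0(x)=B_i\nabla q_i(x)$, where $p_0(x)=\tfrac18\operatorname{tr}(f_0'(x))^2$ and $q_i(x)=\tfrac18\operatorname{tr}(B_i^{\rm T}(f_0'(x))^2)$.
   Context: Standing setup: $J=\begin{pmatrix}0&I_3\\-I_3&0\end{pmatrix}$ ($6\times6$). $A$ is a fixed real $6\times 6$ skew-Hamiltonian matrix ($A^{\rm T}J=JA$). $H_0$ is a homogeneous cubic polynomial on $\mathbb R^6$ with $A\nabla^2H_0(x)=\nabla^2H_0(x)A^{\rm T}$ for all $x$ ($\nabla^2$ = Hesse matrix), $f_0=J\nabla H_0$, and $f_0'$ is its Jacobi matrix. Genericity: the characteristic polynomial of $A$ (a square of a cubic) has three pairwise distinct roots $\lambda_1,\lambda_2,\lambda_3$, each a double eigenvalue. $B_i=\alpha_iI+\beta_iA+\gamma_iA^2$ ($i=1,2,3$), where $\alpha_i+\beta_i\lambda+\gamma_i\lambda^2$ is the unique polynomial of degree $\le2$ equal to $-1$ at $\lambda_i$ and to $1$ at the other two eigenvalues; $B_i^2=I$. *)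

theory Defs
  imports "HOL-Analysis.Analysis"
begin

definition idx6 :: "6 \<Rightarrow> nat" where
  "idx6 i = nat (Rep_bit0 i)"

text \<open>The symplectic matrix J = [[0, I3], [-I3, 0]].\<close>
definition Jmat :: "real^6^6" where
  "Jmat = (\<chi> i j. if idx6 j = idx6 i + 3 then 1 else if idx6 i = idx6 j + 3 then -1 else 0)"

definition grad :: "(real^'n \<Rightarrow> real) \<Rightarrow> real^'n \<Rightarrow> real^'n" where
  "grad f x = (THE D. GDERIV f x :> D)"

definition jac :: "(real^'n \<Rightarrow> real^'m) \<Rightarrow> real^'n \<Rightarrow> real^'n^'m" where
  "jac f x = matrix (frechet_derivative f (at x))"

definition hess :: "(real^'n \<Rightarrow> real) \<Rightarrow> real^'n \<Rightarrow> real^'n^'n" where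
  "hess f x = jac (grad f) x"

definition hom_cubic :: "(real^'n \<Rightarrow> real) \<Rightarrow> bool" where
  "hom_cubic H \<longleftrightarrow> (\<exists>c :: 'n \<Rightarrow> 'n \<Rightarrow> 'n \<Rightarrow> real.
      \<forall>x. H x = (\<Sum>i\<in>UNIV. \<Sum>j\<in>UNIV. \<Sum>k\<in>UNIV. c i j k * x$i * x$j * x$k))"

definition charpoly :: "real^'n^'n \<Rightarrow> real \<Rightarrow> real" where
  "charpoly A t = det (mat t - A)"

end

theory Submission
  imports Defs
begin

text \<open>A skew-Hamiltonian \<open>6\<times>6\<close> matrix \<open>A\<close> has the block form \<open>[[W, G], [H, W\<^sup>T]]\<close> with \<open>G\<close>, \<open>H\<close>
  skew-symmetric, and is annihilated by the cubic whose roots are its eigenvalues counted once. Since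
  \<open>(\<alpha>\<^sub>i + \<beta>\<^sub>i t + \<gamma>\<^sub>i t\<^sup>2)\<^sup>2 - 1\<close> vanishes at these three distinct roots, it is divisible by that
  cubic, so \<open>B = B\<^sub>i\<close> is an involution. Being a polynomial in \<open>A\<close>, \<open>B\<close> inherits \<open>B\<^sup>T J = J B\<close> and
  \<open>B S(y) = S(y) B\<^sup>T\<close> for the Hesse matrix \<open>S(y)\<close> of \<open>H\<^sub>0\<close>. As \<open>H\<^sub>0\<close> is cubic, \<open>S(u) v = S(v) u\<close>,
  which turns the latter relation into \<open>S(B\<^sup>T h) = B S(h)\<close>. Hence \<open>f\<^sub>0'(B\<^sup>T h) = B\<^sup>T f\<^sub>0'(h)\<close> and
  \<open>B\<^sup>T f\<^sub>0'(x) B\<^sup>T = f\<^sub>0'(x)\<close>, so the derivative of \<open>q\<^sub>i\<close> at \<open>x\<close> in direction \<open>B\<^sup>T h\<close> equals that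
  of \<open>p\<^sub>0\<close> in direction \<open>h\<close>, which is the claimed identity of gradients.\<close>

section \<open>Matrix algebra\<close>

lemma matrix_add_rdistrib: "((A::'a::semiring_1^'n^'m) + B) ** C = A ** C + B ** C"
  by (simp add: matrix_matrix_mult_def vec_eq_iff sum.distrib distrib_right)

lemma matrix_diff_rdistrib: "((A::'a::ring_1^'n^'m) - B) ** C = A ** C - B ** C"
  by (simp add: matrix_matrix_mult_def vec_eq_iff sum_subtractf left_diff_distrib)

lemma matrix_diff_ldistrib: "(A::'a::ring_1^'n^'m) ** (B - C) = A ** B - A ** C"
  by (simp add: matrix_matrix_mult_def vec_eq_iff sum_subtractf right_diff_distrib)

lemma transpose_add: "transpose (A + B) = transpose A + transpose B"
  by (simp add: vec_eq_iff transpose_def)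

lemma trace_scaleR: "trace (r *\<^sub>R (A::real^'n^'n)) = r * trace A"
  by (simp add: trace_def sum_distrib_left)

lemma mat_mult_vec: "(mat l :: real^'n^'n) *v v = l *\<^sub>R v"
proof -
  have "mat l = l *\<^sub>R (mat 1 :: real^'n^'n)"
    by (simp add: vec_eq_iff mat_def)
  then show ?thesis
    by (simp add: scaleR_matrix_vector_assoc[symmetric])
qed

lemma linear_matrix_mult_left:
  fixes F :: "real^'k \<Rightarrow> real^'n^'m" and M :: "real^'m^'p"
  assumes "linear F"
  shows "linear (\<lambda>y. M ** F y)"
  using assms by (auto simp: linear_iff matrix_add_ldistrib matrix_scalar_ac scalar_matrix_assoc)

lemma eigenvector_exists:
  fixes A :: "real^'n^'n"
  assumes "det (mat l - A) = 0"
  obtains v where "v \<noteq> 0" "A *v v = l *\<^sub>R v"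
proof -
  have "\<not> invertible (mat l - A)"
    using assms by (simp add: invertible_det_nz)
  then obtain v where "(mat l - A) *v v = 0" "v \<noteq> 0"
    by (auto simp: invertible_left_inverse matrix_left_invertible_ker)
  then show ?thesis
    using that by (simp add: matrix_vector_mult_diff_rdistrib mat_mult_vec)
qed

lemma eigenvalue_root_of_annihilating_cubic:
  fixes A :: "real^'n^'n"
  assumes cubic: "A ** A ** A = e1 *\<^sub>R (A ** A) - e2 *\<^sub>R A + e3 *\<^sub>R mat 1"
    and "v \<noteq> 0" "A *v v = l *\<^sub>R v"
  shows "l^3 = e1 * l^2 - e2 * l + e3"
proof -
  have "(A ** A ** A) *v v = (e1 * l^2 - e2 * l + e3) *\<^sub>R v"
    by (simp add: cubic mat_mult_vec
        scaleR_matrix_vector_assoc[symmetric] matrix_vector_mul_assoc[symmetric] assms(3)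
        power2_eq_square algebra_simps)
  moreover have "(A ** A ** A) *v v = l^3 *\<^sub>R v"
    by (simp add: matrix_vector_mul_assoc[symmetric] assms(3) matrix_vector_mult_scaleR power3_eq_cube)
  ultimately show ?thesis
    using assms(2) by (metis scaleR_cancel_right)
qed

lemma quadratic_eq_0_at_three_points:
  fixes x1 x2 x3 a b c :: real
  assumes "x1 \<noteq> x2" "x1 \<noteq> x3" "x2 \<noteq> x3"
    and "\<And>x. x \<in> {x1, x2, x3} \<Longrightarrow> a * x^2 + b * x + c = 0"
  shows "a = 0" "b = 0" "c = 0"
proof -
  have "(x1 - x2) * (a * (x1 + x2) + b) = 0" "(x1 - x3) * (a * (x1 + x3) + b) = 0"
    using assms(4)[of x1] assms(4)[of x2] assms(4)[of x3] by (auto simp: algebra_simps power2_eq_square)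
  then have "a * (x1 + x2) + b = 0" "a * (x1 + x3) + b = 0"
    using assms(1,2) by auto
  then have "a * (x1 + x2) = a * (x1 + x3)"
    by linarith
  then show "a = 0"
    using assms(3) by simp
  then show "b = 0" "c = 0"
    using \<open>a * (x1 + x2) + b = 0\<close> assms(4)[of x1] by auto
qed

definition matrix_quadratic :: "real \<Rightarrow> real \<Rightarrow> real \<Rightarrow> real^'n^'n \<Rightarrow> real^'n^'n" where
  "matrix_quadratic a b g M = a *\<^sub>R mat 1 + b *\<^sub>R M + g *\<^sub>R (M ** M)"

lemma matrix_quadratic_intertwine:
  assumes "P ** X = X ** Q"
  shows "matrix_quadratic a b g P ** X = X ** matrix_quadratic a b g Q"
proof -
  have "(P ** P) ** X = X ** (Q ** Q)"
    by (metis assms matrix_mul_assoc)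
  with assms show ?thesis
    by (simp add: matrix_quadratic_def matrix_add_rdistrib matrix_add_ldistrib matrix_scalar_ac
        scalar_matrix_assoc[symmetric])
qed

lemma transpose_matrix_quadratic:
  "transpose (matrix_quadratic a b g M) = matrix_quadratic a b g (transpose M)"
  by (simp add: matrix_quadratic_def transpose_add transpose_scalar matrix_transpose_mul)

lemma matrix_quadratic_involution:
  fixes A :: "real^'n^'n"
  assumes cubic: "A ** A ** A = e1 *\<^sub>R (A ** A) - e2 *\<^sub>R A + e3 *\<^sub>R mat 1"
    and distinct: "l1 \<noteq> l2" "l1 \<noteq> l3" "l2 \<noteq> l3"
    and roots: "\<And>l. l \<in> {l1, l2, l3} \<Longrightarrow> l^3 = e1 * l^2 - e2 * l + e3"
    and involutive: "\<And>l. l \<in> {l1, l2, l3} \<Longrightarrow> (a + b * l + g * l^2)^2 = 1"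
  shows "matrix_quadratic a b g A ** matrix_quadratic a b g A = mat 1"
proof -
  \<comment> \<open>the coefficients of \<open>(a + b t + g t\<^sup>2)\<^sup>2\<close> reduced modulo \<open>t\<^sup>3 - e1 t\<^sup>2 + e2 t - e3\<close>\<close>
  define u0 where "u0 = a^2 + 2*b*g*e3 + g^2*e1*e3"
  define u1 where "u1 = 2*a*b - 2*b*g*e2 + g^2*(e3 - e1*e2)"
  define u2 where "u2 = b^2 + 2*a*g + 2*b*g*e1 + g^2*(e1^2 - e2)"
  have square: "matrix_quadratic a b g A ** matrix_quadratic a b g A
      = u2 *\<^sub>R (A ** A) + u1 *\<^sub>R A + u0 *\<^sub>R mat 1"
    unfolding matrix_quadratic_def
    by (simp add: matrix_add_ldistrib matrix_add_rdistrib matrix_diff_ldistrib matrix_diff_rdistrib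
        matrix_scalar_ac scalar_matrix_assoc[symmetric] matrix_mul_assoc cubic vec_eq_iff
        u0_def u1_def u2_def; algebra)
  have "u2 * l^2 + u1 * l + (u0 - 1) = 0" if "l \<in> {l1, l2, l3}" for l
  proof -
    have "u2 * l^2 + u1 * l + (u0 - 1) = (a + b * l + g * l^2)^2 - 1
        - (2*b*g + g^2*l + g^2*e1) * (l^3 - (e1 * l^2 - e2 * l + e3))"
      unfolding u0_def u1_def u2_def by algebra
    then show ?thesis
      using roots[OF that] involutive[OF that] by simp
  qed
  from quadratic_eq_0_at_three_points[OF distinct this] show ?thesis
    unfolding square by simp
qed

section \<open>Gradients and Jacobi matrices\<close>

lemma grad_eqI:
  fixes f :: "real^'n \<Rightarrow> real"
  assumes "(f has_derivative (\<lambda>h. h \<bullet> D)) (at x)"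
  shows "grad f x = D"
  unfolding grad_def gderiv_def
proof (rule the_equality)
  show "(f has_derivative (\<lambda>h. h \<bullet> D)) (at x)" by (rule assms)
  fix D' assume "(f has_derivative (\<lambda>h. h \<bullet> D')) (at x)"
  then have "(\<lambda>h. h \<bullet> D') = (\<lambda>h. h \<bullet> D)"
    using assms by (rule has_derivative_unique)
  then show "D' = D"
    by (metis vec_eq_iff inner_axis' inner_real_def mult_1)
qed

lemma has_derivative_grad:
  fixes f :: "real^'n \<Rightarrow> real"
  assumes "(f has_derivative f') (at x)"
  shows "f' = (\<lambda>h. h \<bullet> grad f x)"
proof -
  define D where "D = (\<chi> i. f' (axis i 1))"
  have lin: "linear f'"
    using assms by (rule has_derivative_linear)
  have "f' h = h \<bullet> D" for h
  proof -
    have "f' h = f' (\<Sum>i\<in>UNIV. h $ i *\<^sub>R axis i 1)"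
      by (metis basis_expansion scalar_mult_eq_scaleR)
    also have "\<dots> = h \<bullet> D"
      by (simp add: linear_sum[OF lin] linear_scale[OF lin] inner_vec_def D_def)
    finally show ?thesis .
  qed
  then have "f' = (\<lambda>h. h \<bullet> D)" by blast
  with assms show ?thesis
    by (simp add: grad_eqI)
qed

lemma grad_eq_matrix_mult_grad:
  fixes p q :: "real^'n \<Rightarrow> real"
  assumes "(p has_derivative p') (at x)" "(q has_derivative q') (at x)"
    and "\<And>h. p' h = q' (transpose B *v h)"
  shows "grad p x = B *v grad q x"
proof (rule grad_eqI)
  have "p' h = h \<bullet> (B *v grad q x)" for h
    using assms(3) by (simp add: has_derivative_grad[OF assms(2)] dot_lmul_matrix)
  then have "p' = (\<lambda>h. h \<bullet> (B *v grad q x))" by blast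
  with assms(1) show "(p has_derivative (\<lambda>h. h \<bullet> (B *v grad q x))) (at x)" by simp
qed

lemma has_derivative_vecI:
  fixes f :: "real^'n \<Rightarrow> real^'m"
  assumes "\<And>i. ((\<lambda>x. f x $ i) has_derivative (\<lambda>h. f' h $ i)) (at x)"
  shows "(f has_derivative f') (at x)"
  using assms by (subst has_derivative_componentwise_within) (auto simp: Basis_vec_def inner_axis)

lemma has_derivative_vec_nth:
  assumes "(f has_derivative f') F"
  shows "((\<lambda>y. f y $ i) has_derivative (\<lambda>h. f' h $ i)) F"
  using bounded_linear.has_derivative[OF bounded_linear_vec_nth assms] .

lemma jac_mult_vec:
  assumes "(f has_derivative f') (at x)"
  shows "jac f x *v v = f' v"
  using matrix_vector_mul(3)[OF has_derivative_bounded_linear[OF assms]]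
  unfolding jac_def frechet_derivative_at[OF assms, symmetric] by metis

lemma jac_matrix_mult:
  fixes f :: "real^'n \<Rightarrow> real^'m" and M :: "real^'m^'k"
  assumes "(f has_derivative f') (at x)"
  shows "jac (\<lambda>y. M *v f y) x = M ** jac f x"
proof -
  have d: "((\<lambda>y. M *v f y) has_derivative (\<lambda>h. M *v f' h)) (at x)"
    using assms by (rule bounded_linear.has_derivative[OF matrix_vector_mul_bounded_linear])
  show ?thesis
    by (simp add: matrix_eq jac_mult_vec[OF d] jac_mult_vec[OF assms] matrix_vector_mul_assoc[symmetric])
qed

lemma bounded_bilinear_trace_mult: "bounded_bilinear (\<lambda>X Y :: real^'n^'n. trace (X ** Y))"
  unfolding bilinear_conv_bounded_bilinear[symmetric] bilinear_def linear_iff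
  by (simp add: matrix_add_ldistrib matrix_add_rdistrib trace_add trace_scaleR matrix_scalar_ac
      scalar_matrix_assoc[symmetric])

lemma has_derivative_trace_mult:
  fixes F G :: "real^'m \<Rightarrow> real^'n^'n"
  assumes "(F has_derivative F') (at x)" "(G has_derivative G') (at x)"
  shows "((\<lambda>y. trace (F y ** G y)) has_derivative (\<lambda>h. trace (F x ** G' h) + trace (F' h ** G x))) (at x)"
  using bounded_bilinear.FDERIV[OF bounded_bilinear_trace_mult assms] .

section \<open>Hesse matrices of cubic forms\<close>

definition trilinear_form :: "('n \<Rightarrow> 'n \<Rightarrow> 'n \<Rightarrow> real) \<Rightarrow> real^'n \<Rightarrow> real^'n \<Rightarrow> real^'n \<Rightarrow> real" where
  "trilinear_form c u v w = (\<Sum>i\<in>UNIV. \<Sum>j\<in>UNIV. \<Sum>k\<in>UNIV. c i j k * u$i * v$j * w$k)"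

lemma trilinear_form_zero [simp]:
  "trilinear_form c 0 v w = 0" "trilinear_form c u 0 w = 0" "trilinear_form c u v 0 = 0"
  by (simp_all add: trilinear_form_def)

lemma has_derivative_trilinear_form:
  assumes "(f has_derivative f') (at x)" "(g has_derivative g') (at x)" "(k has_derivative k') (at x)"
  shows "((\<lambda>y. trilinear_form c (f y) (g y) (k y)) has_derivative
    (\<lambda>h. trilinear_form c (f' h) (g x) (k x) + trilinear_form c (f x) (g' h) (k x)
       + trilinear_form c (f x) (g x) (k' h))) (at x)"
  unfolding trilinear_form_def
  by (rule has_derivative_eq_rhs, (rule has_derivative_sum has_derivative_mult has_derivative_const
        has_derivative_vec_nth assms)+) (simp add: fun_eq_iff sum.distrib[symmetric] algebra_simps)

lemma grad_cubic_form:
  "grad (\<lambda>x. trilinear_form c x x x) x =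
    (\<chi> a. trilinear_form c (axis a 1) x x + trilinear_form c x (axis a 1) x + trilinear_form c x x (axis a 1))"
proof -
  have "((\<lambda>x. trilinear_form c x x x) has_derivative
      (\<lambda>h. trilinear_form c h x x + trilinear_form c x h x + trilinear_form c x x h)) (at x)"
    by (intro has_derivative_trilinear_form has_derivative_ident)
  from fun_cong[OF has_derivative_grad[OF this], of "axis a 1" for a] show ?thesis
    by (simp add: vec_eq_iff inner_axis')
qed

definition cubic_hess_action :: "('n \<Rightarrow> 'n \<Rightarrow> 'n \<Rightarrow> real) \<Rightarrow> real^'n \<Rightarrow> real^'n \<Rightarrow> real^'n" where
  "cubic_hess_action c x h = (\<chi> a.
     trilinear_form c (axis a 1) h x + trilinear_form c (axis a 1) x h
   + trilinear_form c h (axis a 1) x + trilinear_form c x (axis a 1) h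
   + trilinear_form c h x (axis a 1) + trilinear_form c x h (axis a 1))"

lemma has_derivative_grad_cubic_form:
  "(grad (\<lambda>x. trilinear_form c x x x) has_derivative cubic_hess_action c x) (at x)"
  unfolding grad_cubic_form[abs_def]
proof (rule has_derivative_vecI)
  fix a
  show "((\<lambda>x. (\<chi> a. trilinear_form c (axis a 1) x x + trilinear_form c x (axis a 1) x
        + trilinear_form c x x (axis a 1)) $ a) has_derivative (\<lambda>h. cubic_hess_action c x h $ a)) (at x)"
    unfolding cubic_hess_action_def vec_lambda_beta
    by (rule has_derivative_eq_rhs, (rule has_derivative_add has_derivative_trilinear_form
          has_derivative_ident has_derivative_const)+) (simp add: fun_eq_iff ac_simps)
qed

lemma hess_cubic_form_swap:
  "hess (\<lambda>x. trilinear_form c x x x) u *v v = hess (\<lambda>x. trilinear_form c x x x) v *v u"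
  unfolding hess_def jac_mult_vec[OF has_derivative_grad_cubic_form]
  by (simp add: cubic_hess_action_def ac_simps)

section \<open>The gradient identity\<close>

lemma linear_if_mult_vec_swap:
  fixes S :: "real^'n \<Rightarrow> real^'n^'m"
  assumes "\<And>u v. S u *v v = S v *v u"
  shows "linear S"
proof (rule linearI)
  show "S (u + w) = S u + S w" for u w
    by (simp add: matrix_eq assms[of "u + w"] assms[of u] assms[of w] matrix_vector_right_distrib
        matrix_vector_mult_add_rdistrib)
  show "S (r *\<^sub>R u) = r *\<^sub>R S u" for r u
    by (simp add: matrix_eq assms[of "r *\<^sub>R u"] assms[of u] matrix_vector_mult_scaleR
        scaleR_matrix_vector_assoc[symmetric])
qed

lemma mult_vec_swap_intertwine:
  fixes S :: "real^'n \<Rightarrow> real^'n^'n"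
  assumes swap: "\<And>u v. S u *v v = S v *v u"
    and BS: "\<And>y. B ** S y = S y ** transpose B"
  shows "S (transpose B *v h) = B ** S h"
proof -
  have "S (transpose B *v h) *v v = (B ** S h) *v v" for v
  proof -
    have "S (transpose B *v h) *v v = (S v ** transpose B) *v h"
      by (metis swap matrix_vector_mul_assoc)
    also have "\<dots> = B *v (S h *v v)"
      by (simp add: BS[symmetric] matrix_vector_mul_assoc[symmetric] swap[of v])
    finally show ?thesis
      by (simp add: matrix_vector_mul_assoc)
  qed
  then show ?thesis
    by (simp add: matrix_eq)
qed

lemma grad_trace_square_intertwined:
  fixes S :: "real^'n \<Rightarrow> real^'n^'n" and B J :: "real^'n^'n"
  assumes swap: "\<And>u v. S u *v v = S v *v u"
    and BS: "\<And>y. B ** S y = S y ** transpose B"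
    and BJ: "transpose B ** J = J ** B"
    and BB: "B ** B = mat 1"
  shows "grad (\<lambda>y. (1/8) * trace ((J ** S y) ** (J ** S y))) x
       = B *v grad (\<lambda>y. (1/8) * trace (transpose B ** ((J ** S y) ** (J ** S y)))) x"
proof -
  define F where "F y = J ** S y" for y
  have lin: "linear F"
    unfolding F_def using linear_if_mult_vec_swap[OF swap] by (rule linear_matrix_mult_left)
  have dF: "(F has_derivative F) (at x)"
    using lin by (rule linear_imp_has_derivative)
  have dBF: "((\<lambda>y. transpose B ** F y) has_derivative (\<lambda>y. transpose B ** F y)) (at x)"
    using linear_matrix_mult_left[OF lin] by (rule linear_imp_has_derivative)
  have FB: "F (transpose B *v h) = transpose B ** F h" for h
    unfolding F_def mult_vec_swap_intertwine[OF swap BS] by (simp add: matrix_mul_assoc BJ)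
  have BtBt: "transpose B ** transpose B = mat 1"
    by (metis BB matrix_transpose_mul transpose_mat)
  have "transpose B ** F x ** transpose B = J ** (B ** (S x ** transpose B))"
    by (simp add: F_def BJ matrix_mul_assoc)
  also have "\<dots> = J ** ((B ** B) ** S x)"
    by (simp only: BS[symmetric] matrix_mul_assoc)
  finally have conj: "transpose B ** F x ** transpose B = F x"
    by (simp add: BB F_def)
  show ?thesis
    unfolding F_def[symmetric] matrix_mul_assoc
  proof (rule grad_eq_matrix_mult_grad)
    show "((\<lambda>y. 1/8 * trace (F y ** F y)) has_derivative
        (\<lambda>h. 1/8 * (trace (F x ** F h) + trace (F h ** F x)))) (at x)"
      by (intro has_derivative_mult_right has_derivative_trace_mult dF)
    show "((\<lambda>y. 1/8 * trace (transpose B ** F y ** F y)) has_derivative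
        (\<lambda>h. 1/8 * (trace (transpose B ** F x ** F h) + trace (transpose B ** F h ** F x)))) (at x)"
      by (intro has_derivative_mult_right has_derivative_trace_mult dF dBF)
    show "1/8 * (trace (F x ** F h) + trace (F h ** F x)) = 1/8 * (trace (transpose B ** F x **
        F (transpose B *v h)) + trace (transpose B ** F (transpose B *v h) ** F x))" for h
      unfolding FB by (simp only: matrix_mul_assoc conj BtBt matrix_mul_lid)
  qed
qed

section \<open>Skew-Hamiltonian \<open>6\<times>6\<close> matrices\<close>

lemma exhaust_6:
  fixes i :: 6
  obtains "i = 0" | "i = 1" | "i = 2" | "i = 3" | "i = 4" | "i = 5"
proof (induct i)
  case (of_int z)
  then have "z = 0 \<or> z = 1 \<or> z = 2 \<or> z = 3 \<or> z = 4 \<or> z = 5" by fastforce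
  then show ?case using of_int by auto
qed

lemma UNIV_6: "(UNIV::6 set) = {0,1,2,3,4,5}"
proof -
  have "i \<in> {0,1,2,3,4,5}" for i :: 6
    by (cases i rule: exhaust_6) auto
  then show ?thesis by blast
qed

lemma forall_6: "(\<forall>i::6. P i) \<longleftrightarrow> P 0 \<and> P 1 \<and> P 2 \<and> P 3 \<and> P 4 \<and> P 5"
  by (metis exhaust_6)

lemma sum_6: "(\<Sum>i\<in>(UNIV::6 set). f i) = f 0 + f 1 + f 2 + f 3 + f 4 + f 5"
  unfolding UNIV_6 by (simp add: ac_simps)

lemma Jmat_entries:
  "Jmat $ i $ j = (if idx6 j = idx6 i + 3 then 1 else if idx6 i = idx6 j + 3 then - 1 else 0)"
  and idx6_numerals: "idx6 0 = 0" "idx6 1 = 1" "idx6 2 = 2" "idx6 3 = 3" "idx6 4 = 4" "idx6 5 = 5"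
  by (simp_all add: Jmat_def idx6_def bit0.Rep_0 bit0.Rep_1 bit0.Rep_numeral)

lemma skew_hamiltonian_entries:
  assumes "transpose A ** Jmat = Jmat ** A"
  shows "A $ 3 $ 3 = A $ 0 $ 0" "A $ 3 $ 4 = A $ 1 $ 0" "A $ 3 $ 5 = A $ 2 $ 0"
    "A $ 4 $ 3 = A $ 0 $ 1" "A $ 4 $ 4 = A $ 1 $ 1" "A $ 4 $ 5 = A $ 2 $ 1"
    "A $ 5 $ 3 = A $ 0 $ 2" "A $ 5 $ 4 = A $ 1 $ 2" "A $ 5 $ 5 = A $ 2 $ 2"
    "A $ 0 $ 3 = 0" "A $ 1 $ 4 = 0" "A $ 2 $ 5 = 0" "A $ 1 $ 3 = - A $ 0 $ 4"
    "A $ 2 $ 3 = - A $ 0 $ 5" "A $ 2 $ 4 = - A $ 1 $ 5"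
    "A $ 3 $ 0 = 0" "A $ 4 $ 1 = 0" "A $ 5 $ 2 = 0" "A $ 4 $ 0 = - A $ 3 $ 1"
    "A $ 5 $ 0 = - A $ 3 $ 2" "A $ 5 $ 1 = - A $ 4 $ 2"
proof -
  \<comment> \<open>in turn: \<open>A = [[W, G], [H, W\<^sup>T]]\<close>, \<open>G\<close> is skew, \<open>H\<close> is skew\<close>
  have "(transpose A ** Jmat) $ i $ j = (Jmat ** A) $ i $ j" for i j
    using assms by simp
  note e = this[unfolded matrix_matrix_mult_def transpose_def sum_6 Jmat_entries, simplified idx6_numerals]
  show "A $ 3 $ 3 = A $ 0 $ 0" "A $ 3 $ 4 = A $ 1 $ 0" "A $ 3 $ 5 = A $ 2 $ 0"
    "A $ 4 $ 3 = A $ 0 $ 1" "A $ 4 $ 4 = A $ 1 $ 1" "A $ 4 $ 5 = A $ 2 $ 1"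
    "A $ 5 $ 3 = A $ 0 $ 2" "A $ 5 $ 4 = A $ 1 $ 2" "A $ 5 $ 5 = A $ 2 $ 2"
    using e[of 0 3] e[of 0 4] e[of 0 5] e[of 1 3] e[of 1 4] e[of 1 5] e[of 2 3] e[of 2 4] e[of 2 5]
    by (simp_all add: idx6_numerals)
  show "A $ 0 $ 3 = 0" "A $ 1 $ 4 = 0" "A $ 2 $ 5 = 0" "A $ 1 $ 3 = - A $ 0 $ 4"
    "A $ 2 $ 3 = - A $ 0 $ 5" "A $ 2 $ 4 = - A $ 1 $ 5"
    using e[of 3 3] e[of 4 4] e[of 5 5] e[of 4 3] e[of 5 3] e[of 5 4] by (simp_all add: idx6_numerals)
  show "A $ 3 $ 0 = 0" "A $ 4 $ 1 = 0" "A $ 5 $ 2 = 0" "A $ 4 $ 0 = - A $ 3 $ 1"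
    "A $ 5 $ 0 = - A $ 3 $ 2" "A $ 5 $ 1 = - A $ 4 $ 2"
    using e[of 0 0] e[of 1 1] e[of 2 2] e[of 1 0] e[of 2 0] e[of 2 1] by (simp_all add: idx6_numerals)
qed

text \<open>The elementary symmetric functions of the eigenvalues of a skew-Hamiltonian matrix, each
  counted once: Newton's identities applied to the power sums \<open>trace (M\<^sup>k) / 2\<close>.\<close>

definition esym1 :: "real^'n^'n \<Rightarrow> real" where
  "esym1 M = trace M / 2"

definition esym2 :: "real^'n^'n \<Rightarrow> real" where
  "esym2 M = (esym1 M * trace M / 2 - trace (M ** M) / 2) / 2"

definition esym3 :: "real^'n^'n \<Rightarrow> real" where
  "esym3 M = (esym2 M * trace M / 2 - esym1 M * trace (M ** M) / 2 + trace (M ** M ** M) / 2) / 3"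

lemma skew_hamiltonian_cubic:
  assumes "transpose A ** Jmat = Jmat ** A"
  shows "A ** A ** A = esym1 A *\<^sub>R (A ** A) - esym2 A *\<^sub>R A + esym3 A *\<^sub>R mat 1"
  unfolding vec_eq_iff forall_6
  by (intro conjI; simp add: skew_hamiltonian_entries[OF assms] matrix_matrix_mult_def trace_def mat_def
        sum_6 esym1_def esym2_def esym3_def; algebra)

theorem mainTheorem14:
  fixes A :: "real^6^6" and H0 :: "real^6 \<Rightarrow> real"
    and lam :: "nat \<Rightarrow> real"
    and \<alpha> \<beta> \<gamma> :: "nat \<Rightarrow> real"
    and i :: nat and x :: "real^6"
  assumes skewHam: "transpose A ** Jmat = Jmat ** A"
    and cubic: "hom_cubic H0"
    and comm: "\<forall>y. A ** hess H0 y = hess H0 y ** transpose A"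
    and distinct: "lam 1 \<noteq> lam 2" "lam 1 \<noteq> lam 3" "lam 2 \<noteq> lam 3"
    and charp: "\<forall>t. charpoly A t = ((t - lam 1) * (t - lam 2) * (t - lam 3))^2"
    and interp: "\<forall>k\<in>{1,2,3}. \<forall>m\<in>{1,2,3::nat}.
        \<alpha> k + \<beta> k * lam m + \<gamma> k * (lam m)^2 = (if m = k then -1 else 1)"
    and i: "i \<in> {1,2,3}"
  shows
    "let B = (\<lambda>k. \<alpha> k *\<^sub>R mat 1 + \<beta> k *\<^sub>R A + \<gamma> k *\<^sub>R (A ** A));
         f0 = (\<lambda>y. Jmat *v grad H0 y);
         f0' = jac f0;
         p0 = (\<lambda>y. (1/8) * trace (f0' y ** f0' y));
         q = (\<lambda>k y. (1/8) * trace (transpose (B k) ** (f0' y ** f0' y)))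
     in grad p0 x = B i *v grad (q i) x"
proof -
  obtain c where H0: "H0 = (\<lambda>x. trilinear_form c x x x)"
    using cubic by (auto simp: hom_cubic_def trilinear_form_def fun_eq_iff)
  define B where "B = matrix_quadratic (\<alpha> i) (\<beta> i) (\<gamma> i) A"
  have cubicA: "A ** A ** A = esym1 A *\<^sub>R (A ** A) - esym2 A *\<^sub>R A + esym3 A *\<^sub>R mat 1"
    using skewHam by (rule skew_hamiltonian_cubic)
  have root: "l^3 = esym1 A * l^2 - esym2 A * l + esym3 A" if "l \<in> {lam 1, lam 2, lam 3}" for l
  proof -
    have "det (mat l - A) = 0"
      using charp that by (auto simp: charpoly_def)
    then obtain v where "v \<noteq> 0" "A *v v = l *\<^sub>R v"
      by (rule eigenvector_exists)
    then show ?thesis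
      by (rule eigenvalue_root_of_annihilating_cubic[OF cubicA])
  qed
  have involutive: "(\<alpha> i + \<beta> i * l + \<gamma> i * l^2)^2 = 1" if "l \<in> {lam 1, lam 2, lam 3}" for l
    using interp i that by auto
  have "B ** B = mat 1"
    unfolding B_def by (rule matrix_quadratic_involution[OF cubicA distinct root involutive])
  moreover have "B ** hess H0 y = hess H0 y ** transpose B" for y
    unfolding B_def transpose_matrix_quadratic using comm by (blast intro: matrix_quadratic_intertwine)
  moreover have "transpose B ** Jmat = Jmat ** B"
    unfolding B_def transpose_matrix_quadratic by (rule matrix_quadratic_intertwine[OF skewHam])
  moreover have "jac (\<lambda>y. Jmat *v grad H0 y) y = Jmat ** hess H0 y" for y
    unfolding H0 hess_def by (rule jac_matrix_mult[OF has_derivative_grad_cubic_form])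
  ultimately show ?thesis
    unfolding Let_def matrix_quadratic_def[symmetric] B_def[symmetric]
    using grad_trace_square_intertwined[OF hess_cubic_form_swap[of c, folded H0]] by simp
qed

end
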